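(* Let $k\ge2$, $\ell\ge1$, and start with $k^\ell$ labeled chips on the root of the infinite rooted directed $k$-ary tree. Consider any stable configuration reached by labeled chip-firing. Let $v$ be any vertex on a layer $t$ with $1\le t\le \ell+1$, and let $S$ be the set of chips which, in the stable configuration, lie in the subtree rooted at $v$. Then the smallest chip of $S$ lies on the bottom straight left descendant of $v$ and the largest chip of $S$ lies on the bottom straight right descendant of $v$.
   Context: The infinite rooted directed $k$-ary tree: every vertex has $k$ children ordered left to right, edges directed from parent to child; the root is on layer $1$, children of a layer-$t$ vertex are on layer $t+1$. Labeled chip-firing: a vertex with at least $k$ chips may fire by choosing any $k$ of its chips and sending the $i$-th smallest label among them to its $i$-th leftmost child; a configuration is stable when no vertex has $\ge k$ chips. With $k^\ell$ chips initially at the root, every stable configuration has exactly one chip on each vertex of layer $\ell+1$ and no other chips. The bottom straight left (resp. right) descendant of a vertex $v$ on layer $t\le \ell+1$ is the unique vertex on layer $\ell+1$ reached from $v$ by repeatedly moving to the leftmost (resp. rightmost) child (it is $v$ itself if $t=\ell+1$). *)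

theory Defs
  imports Main "HOL-Library.Sublist"
begin

text \<open>Vertices of the infinite k-ary tree are encoded as lists of child indices
(the path from the root); the root is [] (layer 1), a vertex v lies on layer
length v + 1, and its i-th leftmost child (i = 0..k-1) is v @ [i].
Chips are labelled by natural numbers; a configuration assigns to each vertex
the set of labels of the chips on it.\<close>

type_synonym vertex = "nat list"
type_synonym config = "vertex \<Rightarrow> nat set"

definition in_tree :: "nat \<Rightarrow> vertex \<Rightarrow> bool" where
  "in_tree k v \<longleftrightarrow> (\<forall>i\<in>set v. i < k)"

definition fire :: "nat \<Rightarrow> vertex \<Rightarrow> nat set \<Rightarrow> config \<Rightarrow> config" where
  "fire k v A C = (\<lambda>w.
     if w = v then C v - A
     else if (\<exists>i<k. w = v @ [i]) then C w \<union> {sorted_list_of_set A ! last w}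
     else C w)"

definition fire_step :: "nat \<Rightarrow> config \<Rightarrow> config \<Rightarrow> bool" where
  "fire_step k C C' \<longleftrightarrow>
     (\<exists>v A. in_tree k v \<and> A \<subseteq> C v \<and> card A = k \<and> C' = fire k v A C)"

definition stable :: "nat \<Rightarrow> config \<Rightarrow> bool" where
  "stable k C \<longleftrightarrow> (\<forall>v. card (C v) < k)"

definition init_config :: "nat \<Rightarrow> nat \<Rightarrow> config" where
  "init_config k l = (\<lambda>v. if v = [] then {1..k ^ l} else {})"

definition subtree_chips :: "config \<Rightarrow> vertex \<Rightarrow> nat set" where
  "subtree_chips C v = (\<Union>w\<in>{w. prefix v w}. C w)"

definition bottom_left :: "nat \<Rightarrow> vertex \<Rightarrow> vertex" where
  "bottom_left l v = v @ replicate (l - length v) 0"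

definition bottom_right :: "nat \<Rightarrow> nat \<Rightarrow> vertex \<Rightarrow> vertex" where
  "bottom_right k l v = v @ replicate (l - length v) (k - 1)"

end

theory Submission
  imports Defs
begin

text \<open>A firing at v sends exactly one chip into the subtree of each child of v, the smallest
of the fired chips to the leftmost child and the largest to the rightmost. Hence along any run
all sibling subtrees hold equally many chips, and every chip in a sibling subtree is bounded
below by a chip in the leftmost sibling subtree and above by one in the rightmost. In a stable
configuration each vertex holds fewer than k chips, so counting modulo k shows that the subtree
of a vertex on layer t holds exactly k^(l+1-t) chips, none of them on the vertex itself when
t \<le> l. The minimum of such a subtree therefore lies in the subtree of the leftmost child, and
descending to layer l+1 reaches the bottom straight left descendant; symmetrically for the
maximum.\<close>

lemma mem_subtree_chips_iff: "x \<in> subtree_chips C u \<longleftrightarrow> (\<exists>w. prefix u w \<and> x \<in> C w)"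
  by (simp add: subtree_chips_def)

lemma subtree_chips_prefix_subset: "prefix u u' \<Longrightarrow> subtree_chips C u' \<subseteq> subtree_chips C u"
  by (meson mem_subtree_chips_iff prefix_order.trans subsetI)

lemma chips_subset_subtree_chips: "C u \<subseteq> subtree_chips C u"
  by (auto simp: mem_subtree_chips_iff)

lemma in_tree_snoc [simp]: "in_tree k (v @ [i]) \<longleftrightarrow> in_tree k v \<and> i < k"
  by (auto simp: in_tree_def)

lemma nth_sorted_list_of_set_mem: "card A = k \<Longrightarrow> i < k \<Longrightarrow> sorted_list_of_set A ! i \<in> A"
  by (metis card.infinite length_sorted_list_of_set less_zeroE nth_mem set_sorted_list_of_set)

lemma not_prefix_snoc_self [simp]: "\<not> prefix (v @ [i]) v"
  by (auto dest: prefix_length_le)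

lemma mem_fire_iff:
  "x \<in> fire k v A C w \<longleftrightarrow>
    (x \<in> C w \<and> (w = v \<longrightarrow> x \<notin> A)) \<or> (\<exists>i<k. w = v @ [i] \<and> x = sorted_list_of_set A ! i)"
  unfolding fire_def by auto

lemma subtree_chips_fire_other:
  assumes "A \<subseteq> C v" "card A = k" "k > 0" "\<not> (\<exists>i<k. u = v @ [i])"
  shows "subtree_chips (fire k v A C) u = subtree_chips C u"
proof -
  have "finite A" using assms(2,3) card_gt_0_iff by blast
  then have moved: "x \<in> A \<longleftrightarrow> (\<exists>i<k. x = sorted_list_of_set A ! i)" for x
    using assms(2) by (metis in_set_conv_nth length_sorted_list_of_set set_sorted_list_of_set)
  \<comment> \<open>the subtree at u contains either v and all its children or none of them\<close>
  have "prefix u (v @ [i]) \<longleftrightarrow> prefix u v" if "i < k" for i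
    using assms(4) that by auto
  then show ?thesis
    using assms(1) moved unfolding mem_subtree_chips_iff mem_fire_iff set_eq_iff by blast
qed

lemma subtree_chips_fire_child:
  assumes "i < k"
  shows "subtree_chips (fire k v A C) (v @ [i]) = insert (sorted_list_of_set A ! i) (subtree_chips C (v @ [i]))"
proof -
  have "prefix (v @ [i]) (v @ [j]) \<longleftrightarrow> j = i" for j by auto
  then show ?thesis
    using assms unfolding set_eq_iff insert_iff mem_subtree_chips_iff mem_fire_iff by auto
qed

definition chips_unique :: "config \<Rightarrow> bool" where
  "chips_unique C \<longleftrightarrow> (\<forall>x w w'. x \<in> C w \<longrightarrow> x \<in> C w' \<longrightarrow> w = w')"

definition chips_in_tree :: "nat \<Rightarrow> config \<Rightarrow> bool" where
  "chips_in_tree k C \<longleftrightarrow> (\<forall>w. C w \<noteq> {} \<longrightarrow> in_tree k w)"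

definition siblings_equal_card :: "nat \<Rightarrow> config \<Rightarrow> bool" where
  "siblings_equal_card k C \<longleftrightarrow> (\<forall>w i j. in_tree k w \<longrightarrow> i < k \<longrightarrow> j < k \<longrightarrow>
     card (subtree_chips C (w @ [i])) = card (subtree_chips C (w @ [j])))"

text \<open>Stated elementwise rather than with Min and Max, which are unspecified on the empty
subtrees of early configurations.\<close>
definition child_dominates :: "nat \<Rightarrow> (nat \<Rightarrow> nat \<Rightarrow> bool) \<Rightarrow> nat \<Rightarrow> config \<Rightarrow> bool" where
  "child_dominates k R j C \<longleftrightarrow> (\<forall>w i. in_tree k w \<longrightarrow> i < k \<longrightarrow>
     (\<forall>x \<in> subtree_chips C (w @ [i]). \<exists>y \<in> subtree_chips C (w @ [j]). R y x))"

lemma chips_unique_node_child_disjoint: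
  assumes "chips_unique C"
  shows "C v \<inter> subtree_chips C (v @ [i]) = {}"
proof -
  have "\<not> prefix (v @ [i]) v" by simp
  then show ?thesis
    using assms unfolding chips_unique_def disjoint_iff mem_subtree_chips_iff by blast
qed

lemma chips_unique_siblings_disjoint:
  assumes "chips_unique C" "i \<noteq> j"
  shows "subtree_chips C (w @ [i]) \<inter> subtree_chips C (w @ [j]) = {}"
proof -
  have "\<not> prefix (w @ [i]) (w @ [j])" "\<not> prefix (w @ [j]) (w @ [i])"
    using assms(2) by (auto dest: prefix_length_le)
  then have "\<not> (prefix (w @ [i]) u \<and> prefix (w @ [j]) u)" for u
    using prefix_same_cases by blast
  then show ?thesis
    using assms(1) unfolding chips_unique_def disjoint_iff mem_subtree_chips_iff by blast
qed

lemma chips_in_tree_fire: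
  assumes "in_tree k v" "chips_in_tree k C"
  shows "chips_in_tree k (fire k v A C)"
  using assms unfolding chips_in_tree_def fire_def by auto

lemma chips_unique_fire:
  assumes "A \<subseteq> C v" "card A = k" "chips_unique C"
  shows "chips_unique (fire k v A C)"
proof -
  let ?L = "sorted_list_of_set A"
  have moved: "\<exists>i<k. w = v @ [i] \<and> x = ?L ! i" if "x \<in> A" "x \<in> fire k v A C w" for x w
  proof -
    have "x \<in> C v" using assms(1) that(1) by blast
    then show ?thesis using that assms(3) by (auto simp: mem_fire_iff chips_unique_def)
  qed
  have stayed: "x \<in> C w" if "x \<notin> A" "x \<in> fire k v A C w" for x w
    using that nth_sorted_list_of_set_mem[OF assms(2)] by (auto simp: mem_fire_iff)
  have "i = j" if "i < k" "j < k" "?L ! i = ?L ! j" for i j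
    using that assms(2) by (simp add: nth_eq_iff_index_eq)
  then show ?thesis
    using moved stayed assms(3) unfolding chips_unique_def by metis
qed

lemma subtree_chips_fire_not_child:
  assumes "A \<subseteq> C v" "card A = k" "k > 0" "w \<noteq> v"
  shows "subtree_chips (fire k v A C) (w @ [i]) = subtree_chips C (w @ [i])"
  using assms by (intro subtree_chips_fire_other) auto

lemma siblings_equal_card_fire:
  assumes "A \<subseteq> C v" "card A = k" "k > 0" "chips_unique C" "\<And>u. finite (subtree_chips C u)"
    and "siblings_equal_card k C"
  shows "siblings_equal_card k (fire k v A C)"
proof -
  have "card (subtree_chips (fire k v A C) (v @ [i])) = Suc (card (subtree_chips C (v @ [i])))"
    if "i < k" for i
  proof -
    have "sorted_list_of_set A ! i \<in> C v"
      using assms(1) nth_sorted_list_of_set_mem[OF assms(2) that] by blast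
    then have "sorted_list_of_set A ! i \<notin> subtree_chips C (v @ [i])"
      using chips_unique_node_child_disjoint[OF assms(4)] by blast
    then show ?thesis using subtree_chips_fire_child[OF that] assms(5) by simp
  qed
  then show ?thesis
    using assms(6) subtree_chips_fire_not_child[of A C v, OF assms(1-3)]
    unfolding siblings_equal_card_def by (metis (no_types, lifting))
qed

lemma child_dominates_fire:
  assumes "A \<subseteq> C v" "card A = k" "k > 0" "j < k"
    and "\<And>i. i < k \<Longrightarrow> R (sorted_list_of_set A ! j) (sorted_list_of_set A ! i)"
    and "child_dominates k R j C"
  shows "child_dominates k R j (fire k v A C)"
  unfolding child_dominates_def
proof (intro allI impI ballI)
  fix w i x
  assume "in_tree k w" "i < k" and x: "x \<in> subtree_chips (fire k v A C) (w @ [i])"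
  then have old: "\<forall>x \<in> subtree_chips C (w @ [i]). \<exists>y \<in> subtree_chips C (w @ [j]). R y x"
    using assms(6) unfolding child_dominates_def by blast
  show "\<exists>y \<in> subtree_chips (fire k v A C) (w @ [j]). R y x"
  proof (cases "w = v")
    case True
    then show ?thesis
      using x old assms(5)[OF \<open>i < k\<close>] subtree_chips_fire_child[OF \<open>i < k\<close>]
        subtree_chips_fire_child[OF assms(4)] by auto
  next
    case False
    then show ?thesis using x old subtree_chips_fire_not_child[of A C v, OF assms(1-3)] by simp
  qed
qed

definition chip_invariant :: "nat \<Rightarrow> nat \<Rightarrow> config \<Rightarrow> bool" where
  "chip_invariant k l C \<longleftrightarrow> subtree_chips C [] = {1..k ^ l} \<and> chips_in_tree k C \<and> chips_unique C
     \<and> siblings_equal_card k C \<and> child_dominates k (\<le>) 0 C \<and> child_dominates k (\<ge>) (k - 1) C"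

lemma chip_invariant_finite:
  assumes "chip_invariant k l C"
  shows "finite (subtree_chips C u)"
proof -
  have "subtree_chips C u \<subseteq> subtree_chips C []" by (rule subtree_chips_prefix_subset) simp
  then show ?thesis using assms unfolding chip_invariant_def by (metis finite_atLeastAtMost finite_subset)
qed

lemma chip_invariant_init: "chip_invariant k l (init_config k l)"
proof -
  have "subtree_chips (init_config k l) (w @ [i]) = {}" for w i
    by (auto simp: mem_subtree_chips_iff init_config_def split: if_splits)
  moreover have "subtree_chips (init_config k l) [] = {1..k ^ l}"
    by (auto simp: mem_subtree_chips_iff init_config_def split: if_splits)
  ultimately show ?thesis
    by (auto simp: chip_invariant_def chips_in_tree_def chips_unique_def siblings_equal_card_def
        child_dominates_def init_config_def in_tree_def)
qed

lemma chip_invariant_fire: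
  assumes "chip_invariant k l C" "k > 0" "in_tree k v" "A \<subseteq> C v" "card A = k"
  shows "chip_invariant k l (fire k v A C)"
proof -
  let ?L = "sorted_list_of_set A"
  have "sorted ?L" "length ?L = k" using assms(5) by simp_all
  then have "?L ! 0 \<le> ?L ! i" "?L ! i \<le> ?L ! (k - 1)" if "i < k" for i
    using that by (simp_all add: sorted_nth_mono)
  moreover have "subtree_chips (fire k v A C) [] = subtree_chips C []"
    using assms(2,4,5) by (intro subtree_chips_fire_other) auto
  ultimately show ?thesis
    using assms chip_invariant_finite[OF assms(1)]
    unfolding chip_invariant_def
    by (simp add: chips_in_tree_fire chips_unique_fire siblings_equal_card_fire child_dominates_fire)
qed

lemma chip_invariant_reachable:
  assumes "k > 0" "(fire_step k)\<^sup>*\<^sup>* (init_config k l) C"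
  shows "chip_invariant k l C"
  using assms(2)
proof (induction rule: rtranclp_induct)
  case base
  show ?case by (rule chip_invariant_init)
next
  case (step C C')
  then show ?case using assms(1) chip_invariant_fire unfolding fire_step_def by blast
qed

lemma subtree_chips_eq_node_Un_children:
  assumes "chips_in_tree k C"
  shows "subtree_chips C w = C w \<union> (\<Union>i<k. subtree_chips C (w @ [i]))"
proof (intro equalityI subsetI)
  fix x assume "x \<in> subtree_chips C w"
  then obtain u where u: "prefix w u" "x \<in> C u" unfolding mem_subtree_chips_iff by blast
  show "x \<in> C w \<union> (\<Union>i<k. subtree_chips C (w @ [i]))"
  proof (cases "u = w")
    case False
    obtain r where "u = w @ r" using u(1) by (rule prefixE)
    with False obtain j r' where u_eq: "u = w @ j # r'" by (cases r) auto
    have "in_tree k u" using assms u(2) unfolding chips_in_tree_def by blast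
    then have "j < k" using u_eq by (simp add: in_tree_def)
    moreover have "x \<in> subtree_chips C (w @ [j])"
      using u(2) u_eq unfolding mem_subtree_chips_iff by (metis append.assoc append_Cons append_Nil prefixI)
    ultimately show ?thesis by blast
  qed (use u in simp)
next
  fix x assume "x \<in> C w \<union> (\<Union>i<k. subtree_chips C (w @ [i]))"
  moreover have "subtree_chips C (w @ [i]) \<subseteq> subtree_chips C w" for i
    by (rule subtree_chips_prefix_subset) simp
  ultimately show "x \<in> subtree_chips C w" using chips_subset_subtree_chips[of C w] by blast
qed

lemma card_subtree_chips_eq_node_add_children:
  assumes "chip_invariant k l C" "in_tree k w" "k > 0"
  shows "card (subtree_chips C w) = card (C w) + k * card (subtree_chips C (w @ [0]))"
proof -
  have fin: "finite (subtree_chips C u)" for u by (rule chip_invariant_finite[OF assms(1)])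
  have unique: "chips_unique C" and in_tree: "chips_in_tree k C"
    and equal: "siblings_equal_card k C"
    using assms(1) unfolding chip_invariant_def by blast+
  have "card (subtree_chips C w) = card (C w) + card (\<Union>i<k. subtree_chips C (w @ [i]))"
    unfolding subtree_chips_eq_node_Un_children[OF in_tree, of w]
    using chips_unique_node_child_disjoint[OF unique, of w] fin
      finite_subset[OF chips_subset_subtree_chips fin]
    by (intro card_Un_disjoint) auto
  also have "card (\<Union>i<k. subtree_chips C (w @ [i])) = (\<Sum>i<k. card (subtree_chips C (w @ [i])))"
    using chips_unique_siblings_disjoint[OF unique] fin by (simp add: card_UN_disjoint)
  also have "\<dots> = (\<Sum>i<k. card (subtree_chips C (w @ [0])))"
  proof (rule sum.cong[OF refl])
    fix i assume "i \<in> {..<k}"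
    then show "card (subtree_chips C (w @ [i])) = card (subtree_chips C (w @ [0]))"
      using equal assms(2,3) unfolding siblings_equal_card_def by blast
  qed
  finally show ?thesis by simp
qed

lemma remainder_eq_0_if_mult_eq:
  fixes k c p s :: nat
  assumes "c < k" "k * p = c + k * s"
  shows "c = 0" "s = p"
proof -
  have "c = (k * p) mod k" using assms by simp
  then show "c = 0" by simp
  then show "s = p" using assms by simp
qed

lemma card_subtree_chips_stable:
  assumes "chip_invariant k l C" "stable k C" "k > 0"
  shows "in_tree k w \<Longrightarrow> length w \<le> l \<Longrightarrow> card (subtree_chips C w) = k ^ (l - length w)"
proof (induction w rule: rev_induct)
  case Nil
  then show ?case using assms(1) unfolding chip_invariant_def by simp
next
  case (snoc i w)
  then have w: "in_tree k w" "i < k" "length w < l" by auto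
  have "k * k ^ (l - length (w @ [i])) = card (C w) + k * card (subtree_chips C (w @ [0]))"
    using snoc.IH w card_subtree_chips_eq_node_add_children[OF assms(1) w(1) assms(3)]
    by (simp add: power_eq_if)
  moreover have "card (C w) < k" using assms(2) unfolding stable_def by blast
  moreover have "card (subtree_chips C (w @ [i])) = card (subtree_chips C (w @ [0]))"
    using assms(1,3) w unfolding chip_invariant_def siblings_equal_card_def by blast
  ultimately show ?case using remainder_eq_0_if_mult_eq by metis
qed

lemma stable_node_empty_above_bottom:
  assumes "chip_invariant k l C" "stable k C" "k > 0" "in_tree k w" "length w < l"
  shows "C w = {}"
proof -
  have "k * k ^ (l - length (w @ [0])) = card (C w) + k * card (subtree_chips C (w @ [0]))"
    using assms card_subtree_chips_stable[OF assms(1-3), of w]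
      card_subtree_chips_eq_node_add_children[OF assms(1,4,3)]
    by (simp add: power_eq_if)
  moreover have "card (C w) < k" using assms(2) unfolding stable_def by blast
  ultimately have "card (C w) = 0" using remainder_eq_0_if_mult_eq(1) by blast
  then show ?thesis
    using finite_subset[OF chips_subset_subtree_chips chip_invariant_finite[OF assms(1)]] by simp
qed

lemma stable_subtree_chips_bottom:
  assumes "chip_invariant k l C" "stable k C" "k \<ge> 2" "in_tree k w" "length w = l"
  shows "subtree_chips C w = C w" "C w \<noteq> {}"
proof -
  have "1 = card (C w) + k * card (subtree_chips C (w @ [0]))"
    using card_subtree_chips_stable[OF assms(1,2), of w] assms
      card_subtree_chips_eq_node_add_children[OF assms(1,4)] by simp
  then have card_node: "card (C w) = 1" using assms(3) by (cases "card (subtree_chips C (w @ [0]))") auto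
  moreover have "card (subtree_chips C w) = 1"
    using card_subtree_chips_stable[OF assms(1,2), of w] assms by simp
  ultimately show "subtree_chips C w = C w"
    using chips_subset_subtree_chips chip_invariant_finite[OF assms(1)] by (metis card_subset_eq)
  show "C w \<noteq> {}" using card_node by auto
qed

lemma child_dominates_subtree_chips:
  assumes "child_dominates k R j C" "chips_in_tree k C" "in_tree k w" "C w = {}"
    and "x \<in> subtree_chips C w"
  shows "\<exists>y \<in> subtree_chips C (w @ [j]). R y x"
proof -
  obtain i where "i < k" "x \<in> subtree_chips C (w @ [i])"
    using assms(4,5) subtree_chips_eq_node_Un_children[OF assms(2), of w] by blast
  then show ?thesis using assms(1,3) unfolding child_dominates_def by blast
qed

lemma Min_subtree_chips_eq_leftmost:
  assumes "chip_invariant k l C" "stable k C" "k > 0" "in_tree k w" "length w < l"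
  shows "Min (subtree_chips C w) = Min (subtree_chips C (w @ [0]))"
proof -
  have fin: "finite (subtree_chips C u)" for u by (rule chip_invariant_finite[OF assms(1)])
  have "card (subtree_chips C w) \<noteq> 0"
    using card_subtree_chips_stable[OF assms(1-4)] assms(3,5) by simp
  then have "Min (subtree_chips C w) \<in> subtree_chips C w" using fin by (intro Min_in) auto
  moreover have "child_dominates k (\<le>) 0 C" "chips_in_tree k C"
    using assms(1) unfolding chip_invariant_def by blast+
  ultimately obtain y where y: "y \<in> subtree_chips C (w @ [0])" "y \<le> Min (subtree_chips C w)"
    using child_dominates_subtree_chips stable_node_empty_above_bottom[OF assms] assms(4) by blast
  have "subtree_chips C (w @ [0]) \<subseteq> subtree_chips C w" by (rule subtree_chips_prefix_subset) simp
  then have "Min (subtree_chips C w) \<le> Min (subtree_chips C (w @ [0]))"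
    using y(1) fin by (intro Min_antimono) auto
  moreover have "Min (subtree_chips C (w @ [0])) \<le> y" using y(1) fin by simp
  ultimately show ?thesis using y(2) by simp
qed

lemma Max_subtree_chips_eq_rightmost:
  assumes "chip_invariant k l C" "stable k C" "k > 0" "in_tree k w" "length w < l"
  shows "Max (subtree_chips C w) = Max (subtree_chips C (w @ [k - 1]))"
proof -
  have fin: "finite (subtree_chips C u)" for u by (rule chip_invariant_finite[OF assms(1)])
  have "card (subtree_chips C w) \<noteq> 0"
    using card_subtree_chips_stable[OF assms(1-4)] assms(3,5) by simp
  then have "Max (subtree_chips C w) \<in> subtree_chips C w" using fin by (intro Max_in) auto
  moreover have "child_dominates k (\<ge>) (k - 1) C" "chips_in_tree k C"
    using assms(1) unfolding chip_invariant_def by blast+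
  ultimately obtain y where y: "y \<in> subtree_chips C (w @ [k - 1])" "Max (subtree_chips C w) \<le> y"
    using child_dominates_subtree_chips stable_node_empty_above_bottom[OF assms] assms(4) by blast
  have "subtree_chips C (w @ [k - 1]) \<subseteq> subtree_chips C w" by (rule subtree_chips_prefix_subset) simp
  then have "Max (subtree_chips C (w @ [k - 1])) \<le> Max (subtree_chips C w)"
    using y(1) fin by (intro Max_mono) auto
  moreover have "y \<le> Max (subtree_chips C (w @ [k - 1]))" using y(1) fin by simp
  ultimately show ?thesis using y(2) by simp
qed

lemma Min_subtree_chips_in_bottom_left:
  assumes "chip_invariant k l C" "stable k C" "k \<ge> 2" "in_tree k w" "length w \<le> l"
  shows "Min (subtree_chips C w) \<in> C (bottom_left l w)"
  using assms(4,5)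
proof (induction "l - length w" arbitrary: w)
  case 0
  then have "length w = l" "bottom_left l w = w" by (simp_all add: bottom_left_def)
  then show ?case
    using stable_subtree_chips_bottom[OF assms(1-3) \<open>in_tree k w\<close>]
      chip_invariant_finite[OF assms(1), of w] by simp
next
  case (Suc n)
  then have "bottom_left l (w @ [0]) = bottom_left l w"
    by (simp add: bottom_left_def replicate_app_Cons_same flip: replicate_Suc)
  moreover have "Min (subtree_chips C w) = Min (subtree_chips C (w @ [0]))"
    using Suc.hyps(2) Suc.prems assms(1-3) by (intro Min_subtree_chips_eq_leftmost) auto
  moreover have "Min (subtree_chips C (w @ [0])) \<in> C (bottom_left l (w @ [0]))"
    using Suc.hyps(2) Suc.prems assms(3) by (intro Suc.hyps(1)) auto
  ultimately show ?case by simp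
qed

lemma Max_subtree_chips_in_bottom_right:
  assumes "chip_invariant k l C" "stable k C" "k \<ge> 2" "in_tree k w" "length w \<le> l"
  shows "Max (subtree_chips C w) \<in> C (bottom_right k l w)"
  using assms(4,5)
proof (induction "l - length w" arbitrary: w)
  case 0
  then have "length w = l" "bottom_right k l w = w" by (simp_all add: bottom_right_def)
  then show ?case
    using stable_subtree_chips_bottom[OF assms(1-3) \<open>in_tree k w\<close>]
      chip_invariant_finite[OF assms(1), of w] by simp
next
  case (Suc n)
  then have "bottom_right k l (w @ [k - 1]) = bottom_right k l w"
    by (simp add: bottom_right_def replicate_app_Cons_same flip: replicate_Suc)
  moreover have "Max (subtree_chips C w) = Max (subtree_chips C (w @ [k - 1]))"
    using Suc.hyps(2) Suc.prems assms(1-3) by (intro Max_subtree_chips_eq_rightmost) auto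
  moreover have "Max (subtree_chips C (w @ [k - 1])) \<in> C (bottom_right k l (w @ [k - 1]))"
    using Suc.hyps(2) Suc.prems assms(3) by (intro Suc.hyps(1)) auto
  ultimately show ?case by simp
qed

theorem lemma2p1:
  fixes k l :: nat and C :: config and v :: vertex
  assumes "k \<ge> 2" and "l \<ge> 1"
    and "(fire_step k)\<^sup>*\<^sup>* (init_config k l) C"
    and "stable k C"
    and "in_tree k v" and "length v \<le> l"
  shows "Min (subtree_chips C v) \<in> C (bottom_left l v)
       \<and> Max (subtree_chips C v) \<in> C (bottom_right k l v)"
proof -
  have "chip_invariant k l C" using assms(1,3) by (intro chip_invariant_reachable) auto
  then show ?thesis
    using Min_subtree_chips_in_bottom_left Max_subtree_chips_in_bottom_right assms(1,4-6) by blast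
qed

end
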